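(* (Weak duality.) Let $h\in\mathcal{M}_{\mathbb{F}}(0)$. Then for all $x\in\mathbb{R}^n$, \[ \sup_{\mathbf{u}\in\mathcal{U}_{\mathbb{F}}(0)} J(0,x;\mathbf{u})\;\le\;\mathbb{E}_{0,x}\Big[\sup_{\mathbf{u}\in\mathcal{U}(0)}\Big\{\Lambda(x_T)+\int_0^T g(t,x_t,u_t)\,dt-h(\mathbf{u},\mathbf{w})\Big\}\Big]. \]
   Context: Let $(\Omega,\mathcal{F},\mathbb{P})$ carry an $m$-dimensional Brownian motion $\mathbf{w}=(w_t)_{t\in[0,T]}$ with natural augmented filtration $\mathbb{F}=\{\mathcal{F}_t\}$, $\mathcal{F}=\mathcal{F}_T$. The controlled state $x_t\in\mathbb{R}^n$ follows $dx_t=b(t,x_t,u_t)\,dt+\sigma(t,x_t)\,dw_t$, $0\le t\le T$, where $u_t\in\mathcal{U}\subset\mathbb{R}^{d_u}$, $b:[0,T]\times\mathbb{R}^n\times\mathcal{U}\to\mathbb{R}^n$, $\sigma:[0,T]\times\mathbb{R}^n\to\mathbb{R}^{n\times m}$ are continuous, with $\|b(t,x,u)\|+\|\sigma(t,x)\|\le C_1(1+\|x\|+\|u\|)$ and $b,\sigma$ Lipschitz in $(t,x)$ uniformly in $u$. The set $\mathcal{U}_{\mathbb{F}}(t)$ of admissible strategies at time $t$ consists of $\mathbb{F}$-progressively measurable $\mathcal{U}$-valued processes $\mathbf{u}=(u_s)_{s\in[t,T]}$ with $\mathbb{E}[\int_t^T\|u_s\|^2ds]<\infty$ and $\mathbb{E}_{t,x}[\sup_{s\in[t,T]}\|x_s\|^2]<\infty$,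 where $\mathbb{E}_{t,x}[\cdot]=\mathbb{E}[\cdot\mid x_t=x]$. The set $\mathcal{U}(t)$ consists of all $\mathcal{B}([t,T])\times\mathcal{F}$-measurable $\mathcal{U}$-valued processes $(u_s)_{s\in[t,T]}$ (possibly anticipative). It is assumed that for each $\mathbf{u}\in\mathcal{U}(0)$ and initial condition $x_0=x$ the state equation has a unique $\mathcal{B}([0,T])\times\mathcal{F}$-measurable solution $(x_t)$, coinciding with the usual Itô solution when $\mathbf{u}\in\mathcal{U}_{\mathbb{F}}(0)$. Rewards $\Lambda:\mathbb{R}^n\to\mathbb{R}$, $g:[0,T]\times\mathbb{R}^n\times\mathcal{U}\to\mathbb{R}$ satisfy polynomial growth: $|\Lambda(x)|\le C_\Lambda(1+\|x\|^{c_\Lambda})$, $|g(t,x,u)|\le C_g(1+\|x\|^{c_g}+\|u\|^{c_g})$. $J(t,x;\mathbf{u})=\mathbb{E}_{t,x}[\Lambda(x_T)+\int_t^T g(s,x_s,u_s)ds]$. The set $\mathcal{M}_{\mathbb{F}}(0)$ of dual feasible penalties consists of functions $h(\mathbf{u},\mathbf{w})$ of a control strategy $\mathbf{u}\in\mathcal{U}(0)$ and a Brownian path $\mathbf{w}$ such that $\mathbb{E}_{0,x}[h(\mathbf{u},\mathbf{w})]\le 0$ for all $x\in\mathbb{R}^n$ and all $\mathbf{u}\in\mathcal{U}_{\mathbb{F}}(0)$. *)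

theory Defs
  imports "HOL-Probability.Probability"
begin

definition brownian_motion ::
  "'a measure \<Rightarrow> real \<Rightarrow> (real \<Rightarrow> 'a \<Rightarrow> real^'m) \<Rightarrow> bool" where
  "brownian_motion M T W \<longleftrightarrow>
     prob_space M \<and>
     (\<forall>t. W t \<in> borel_measurable M) \<and>
     (\<forall>\<omega>\<in>space M. W 0 \<omega> = 0 \<and> continuous_on {0..T} (\<lambda>t. W t \<omega>)) \<and>
     (\<forall>ts::real list. sorted_wrt (<) ts \<longrightarrow> set ts \<subseteq> {0..T} \<longrightarrow>
        prob_space.indep_vars M (\<lambda>_. borel)
          (\<lambda>(i::'m, j::nat) \<omega>. W (ts ! Suc j) \<omega> $ i - W (ts ! j) \<omega> $ i)
          (UNIV \<times> {..<length ts - 1}) \<and>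
        (\<forall>i j. j < length ts - 1 \<longrightarrow>
           distributed M lborel (\<lambda>\<omega>. W (ts ! Suc j) \<omega> $ i - W (ts ! j) \<omega> $ i)
             (normal_density 0 (sqrt (ts ! Suc j - ts ! j)))))"

definition aug_filtration ::
  "'a measure \<Rightarrow> (real \<Rightarrow> 'a \<Rightarrow> real^'m) \<Rightarrow> real \<Rightarrow> 'a measure" where
  "aug_filtration M W t = sigma (space M)
     ({W s -` B \<inter> space M | s B. 0 \<le> s \<and> s \<le> t \<and> B \<in> sets borel} \<union>
      {N. N \<subseteq> space M \<and> (\<exists>B\<in>null_sets M. N \<subseteq> B)})"

definition prog_measurable ::
  "'a measure \<Rightarrow> (real \<Rightarrow> 'a \<Rightarrow> real^'m) \<Rightarrow> real \<Rightarrow> (real \<Rightarrow> 'a \<Rightarrow> 'b::topological_space) \<Rightarrow> bool" where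
  "prog_measurable M W T u \<longleftrightarrow>
     (\<forall>s\<in>{0..T}. (\<lambda>(t, \<omega>). u t \<omega>) \<in>
        borel_measurable (restrict_space lborel {0..s} \<Otimes>\<^sub>M aug_filtration M W s))"

text \<open>The set U(0): all B([0,T]) x F measurable, U-valued (possibly anticipative) processes.\<close>
definition controls_all ::
  "'a measure \<Rightarrow> real \<Rightarrow> (real^'d) set \<Rightarrow> (real \<Rightarrow> 'a \<Rightarrow> real^'d) set" where
  "controls_all M T Uset = {u.
     (\<forall>t\<in>{0..T}. \<forall>\<omega>\<in>space M. u t \<omega> \<in> Uset) \<and>
     (\<lambda>(t, \<omega>). u t \<omega>) \<in> borel_measurable (restrict_space lborel {0..T} \<Otimes>\<^sub>M M)}"

text \<open>The set U_F(0) for initial state x, given the state map X (X u x t \<omega> = x_t under u, x_0 = x).\<close>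
definition controls_adapted ::
  "'a measure \<Rightarrow> (real \<Rightarrow> 'a \<Rightarrow> real^'m) \<Rightarrow> real \<Rightarrow> (real^'d) set
   \<Rightarrow> ((real \<Rightarrow> 'a \<Rightarrow> real^'d) \<Rightarrow> real^'n \<Rightarrow> real \<Rightarrow> 'a \<Rightarrow> real^'n) \<Rightarrow> real^'n
   \<Rightarrow> (real \<Rightarrow> 'a \<Rightarrow> real^'d) set" where
  "controls_adapted M W T Uset X x = {u.
     (\<forall>t\<in>{0..T}. \<forall>\<omega>\<in>space M. u t \<omega> \<in> Uset) \<and>
     prog_measurable M W T u \<and>
     (\<integral>\<^sup>+ \<omega>. (\<integral>\<^sup>+ t. ennreal ((norm (u t \<omega>))\<^sup>2) \<partial>(restrict_space lborel {0..T})) \<partial>M) < \<infinity> \<and>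
     (\<integral>\<^sup>+ \<omega>. (SUP s\<in>{0..T}. ennreal ((norm (X u x s \<omega>))\<^sup>2)) \<partial>M) < \<infinity>}"

text \<open>E[F] = E[F^+] - E[F^-] in the extended reals; when both parts are infinite
  (expectation undefined) the value is taken to be +\<infinity>.\<close>
definition qexp :: "'a measure \<Rightarrow> ('a \<Rightarrow> ereal) \<Rightarrow> ereal" where
  "qexp M F =
     (let P = (\<integral>\<^sup>+ \<omega>. e2ennreal (max 0 (F \<omega>)) \<partial>M);
          N = (\<integral>\<^sup>+ \<omega>. e2ennreal (max 0 (- F \<omega>)) \<partial>M)
      in if P = \<infinity> \<and> N = \<infinity> then \<infinity> else enn2ereal P - enn2ereal N)"

definition reward ::
  "real \<Rightarrow> (real^'n \<Rightarrow> real) \<Rightarrow> (real \<Rightarrow> real^'n \<Rightarrow> real^'d \<Rightarrow> real)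
   \<Rightarrow> ((real \<Rightarrow> 'a \<Rightarrow> real^'d) \<Rightarrow> real^'n \<Rightarrow> real \<Rightarrow> 'a \<Rightarrow> real^'n)
   \<Rightarrow> real^'n \<Rightarrow> (real \<Rightarrow> 'a \<Rightarrow> real^'d) \<Rightarrow> 'a \<Rightarrow> real" where
  "reward T Lam g X x u \<omega> =
     Lam (X u x T \<omega>) + (LINT t:{0..T}|lborel. g t (X u x t \<omega>) (u t \<omega>))"

definition Jval ::
  "'a measure \<Rightarrow> real \<Rightarrow> (real^'n \<Rightarrow> real) \<Rightarrow> (real \<Rightarrow> real^'n \<Rightarrow> real^'d \<Rightarrow> real)
   \<Rightarrow> ((real \<Rightarrow> 'a \<Rightarrow> real^'d) \<Rightarrow> real^'n \<Rightarrow> real \<Rightarrow> 'a \<Rightarrow> real^'n)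
   \<Rightarrow> real^'n \<Rightarrow> (real \<Rightarrow> 'a \<Rightarrow> real^'d) \<Rightarrow> ereal" where
  "Jval M T Lam g X x u = qexp M (\<lambda>\<omega>. ereal (reward T Lam g X x u \<omega>))"

definition dual_feasible ::
  "'a measure \<Rightarrow> (real \<Rightarrow> 'a \<Rightarrow> real^'m) \<Rightarrow> real \<Rightarrow> (real^'d) set
   \<Rightarrow> ((real \<Rightarrow> 'a \<Rightarrow> real^'d) \<Rightarrow> real^'n \<Rightarrow> real \<Rightarrow> 'a \<Rightarrow> real^'n)
   \<Rightarrow> ((real \<Rightarrow> 'a \<Rightarrow> real^'d) \<Rightarrow> (real \<Rightarrow> real^'m) \<Rightarrow> real) \<Rightarrow> bool" where
  "dual_feasible M W T Uset X h \<longleftrightarrow>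
     (\<forall>x. \<forall>u\<in>controls_adapted M W T Uset X x.
        (\<lambda>\<omega>. h u (\<lambda>t. W t \<omega>)) \<in> borel_measurable M \<and>
        qexp M (\<lambda>\<omega>. ereal (h u (\<lambda>t. W t \<omega>))) \<le> 0)"

end

theory Submission
  imports Defs
begin

text \<open>
  For an adapted control u, write R for its pathwise reward and H for the penalty h(u, w).
  Feasibility of h gives E[H] \<le> 0, so J(0, x; u) = E[R] \<le> E[R - H], and pointwise R - H is
  dominated by the supremum of the same expression over all (possibly anticipative) controls,
  a set that contains the adapted ones. Beyond measurability of the reward, the only care
  needed is with the infinite values of the extended-real expectation; neither the Brownian
  structure nor the growth bounds play a role.
\<close>

lemma qexp_ereal:
  "qexp M (\<lambda>\<omega>. ereal (f \<omega>)) =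
     (let P = (\<integral>\<^sup>+ \<omega>. ennreal (f \<omega>) \<partial>M); N = (\<integral>\<^sup>+ \<omega>. ennreal (- f \<omega>) \<partial>M)
      in if P = \<infinity> \<and> N = \<infinity> then \<infinity> else enn2ereal P - enn2ereal N)"
proof -
  have pos: "e2ennreal (max 0 (ereal r)) = ennreal r" for r
    by (simp add: ennreal.abs_eq sup_max)
  have neg: "e2ennreal (max 0 (- ereal r)) = ennreal (- r)" for r
    using pos[of "- r"] by simp
  show ?thesis
    unfolding qexp_def pos neg ..
qed

lemma qexp_ereal_pos_infinite:
  assumes "(\<integral>\<^sup>+ \<omega>. ennreal (f \<omega>) \<partial>M) = \<infinity>"
  shows "qexp M (\<lambda>\<omega>. ereal (f \<omega>)) = \<infinity>"
  using assms unfolding qexp_ereal Let_def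
  by (cases "\<integral>\<^sup>+ \<omega>. ennreal (- f \<omega>) \<partial>M") auto

lemma qexp_ereal_neg_infinite:
  assumes "(\<integral>\<^sup>+ \<omega>. ennreal (f \<omega>) \<partial>M) \<noteq> \<infinity>" "(\<integral>\<^sup>+ \<omega>. ennreal (- f \<omega>) \<partial>M) = \<infinity>"
  shows "qexp M (\<lambda>\<omega>. ereal (f \<omega>)) = - \<infinity>"
  using assms unfolding qexp_ereal Let_def
  by (cases "\<integral>\<^sup>+ \<omega>. ennreal (f \<omega>) \<partial>M") auto

lemma qexp_ereal_integral:
  assumes "integrable M f"
  shows "qexp M (\<lambda>\<omega>. ereal (f \<omega>)) = ereal (integral\<^sup>L M f)"
proof -
  obtain r q where "0 \<le> r" "0 \<le> q"
    and "(\<integral>\<^sup>+ \<omega>. ennreal (f \<omega>) \<partial>M) = ennreal r" "(\<integral>\<^sup>+ \<omega>. ennreal (- f \<omega>) \<partial>M) = ennreal q"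
    and "integral\<^sup>L M f = r - q"
    using assms by (rule integrableE)
  then show ?thesis
    unfolding qexp_ereal Let_def by simp
qed

lemma qexp_mono:
  assumes "\<And>\<omega>. \<omega> \<in> space M \<Longrightarrow> F \<omega> \<le> G \<omega>"
  shows "qexp M F \<le> qexp M G"
proof -
  define PF where "PF = (\<integral>\<^sup>+ \<omega>. e2ennreal (max 0 (F \<omega>)) \<partial>M)"
  define NF where "NF = (\<integral>\<^sup>+ \<omega>. e2ennreal (max 0 (- F \<omega>)) \<partial>M)"
  define PG where "PG = (\<integral>\<^sup>+ \<omega>. e2ennreal (max 0 (G \<omega>)) \<partial>M)"
  define NG where "NG = (\<integral>\<^sup>+ \<omega>. e2ennreal (max 0 (- G \<omega>)) \<partial>M)"
  have P: "PF \<le> PG" unfolding PF_def PG_def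
    by (intro nn_integral_mono e2ennreal_mono) (use assms in \<open>auto intro: max.coboundedI2 order_trans\<close>)
  have N: "NG \<le> NF" unfolding NF_def NG_def
    by (intro nn_integral_mono e2ennreal_mono) (use assms in \<open>auto intro: max.coboundedI2 order_trans\<close>)
  have "(if PF = \<infinity> \<and> NF = \<infinity> then \<infinity> else enn2ereal PF - enn2ereal NF)
      \<le> (if PG = \<infinity> \<and> NG = \<infinity> then \<infinity> else enn2ereal PG - enn2ereal NG)"
  proof (cases "PG = \<infinity> \<and> NG = \<infinity>")
    case True
    then show ?thesis by simp
  next
    case G_defined: False
    show ?thesis
    proof (cases "PF = \<infinity> \<and> NF = \<infinity>")
      case True
      then have "PG = \<infinity>"
        using P by (simp add: top_unique)
      moreover obtain r where "NG = ennreal r"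
        using G_defined \<open>PG = \<infinity>\<close> by (cases NG) auto
      ultimately show ?thesis
        using True by simp
    next
      case False
      have "enn2ereal PF - enn2ereal NF \<le> enn2ereal PG - enn2ereal NG"
        using P N by (intro ereal_minus_mono) (simp_all add: less_eq_ennreal.rep_eq)
      then show ?thesis
        using False G_defined by (simp only: if_False)
    qed
  qed
  then show ?thesis
    unfolding qexp_def Let_def PF_def NF_def PG_def NG_def .
qed

lemma nn_integral_ennreal_add_le:
  assumes "f \<in> borel_measurable M" "g \<in> borel_measurable M"
  shows "(\<integral>\<^sup>+ \<omega>. ennreal (f \<omega> + g \<omega>) \<partial>M) \<le> (\<integral>\<^sup>+ \<omega>. ennreal (f \<omega>) \<partial>M) + (\<integral>\<^sup>+ \<omega>. ennreal (g \<omega>) \<partial>M)"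
proof -
  have "(\<integral>\<^sup>+ \<omega>. ennreal (f \<omega> + g \<omega>) \<partial>M) \<le> (\<integral>\<^sup>+ \<omega>. ennreal (f \<omega>) + ennreal (g \<omega>) \<partial>M)"
    by (intro nn_integral_mono) (auto intro: ennreal_leI simp: ennreal_plus_if)
  also have "\<dots> = (\<integral>\<^sup>+ \<omega>. ennreal (f \<omega>) \<partial>M) + (\<integral>\<^sup>+ \<omega>. ennreal (g \<omega>) \<partial>M)"
    using assms by (simp add: nn_integral_add)
  finally show ?thesis .
qed

text \<open>
  If E[R - H] = +\<infinity> there is nothing to show. Otherwise the positive parts of R - H and H
  have finite integrals, hence so does that of R; then either E[R] = -\<infinity>, or R, R - H and
  H = R - (R - H) are all integrable and the claim is linearity of the integral.
\<close>
lemma qexp_le_qexp_diff: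
  assumes R: "R \<in> borel_measurable M" and H: "H \<in> borel_measurable M"
    and H_nonpos: "qexp M (\<lambda>\<omega>. ereal (H \<omega>)) \<le> 0"
  shows "qexp M (\<lambda>\<omega>. ereal (R \<omega>)) \<le> qexp M (\<lambda>\<omega>. ereal (R \<omega> - H \<omega>))"
proof -
  define pos where "pos f = (\<integral>\<^sup>+ \<omega>. ennreal (f \<omega>) \<partial>M)" for f :: "'a \<Rightarrow> real"
  define D where "D \<omega> = R \<omega> - H \<omega>" for \<omega>
  have D: "D \<in> borel_measurable M"
    using R H unfolding D_def by measurable
  have "pos H \<noteq> \<infinity>"
    using H_nonpos qexp_ereal_pos_infinite[where f = H] unfolding pos_def by auto
  show ?thesis
  proof (cases "pos D = \<infinity>")
    case True
    then show ?thesis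
      using qexp_ereal_pos_infinite[where f = D] unfolding pos_def D_def by simp
  next
    case D_pos: False
    have "pos R \<le> pos D + pos H"
      using nn_integral_ennreal_add_le[OF D H] unfolding pos_def D_def by simp
    with D_pos \<open>pos H \<noteq> \<infinity>\<close> have R_pos: "pos R \<noteq> \<infinity>"
      by (auto simp: top_unique)
    show ?thesis
    proof (cases "pos (\<lambda>\<omega>. - R \<omega>) = \<infinity>")
      case True
      then show ?thesis
        using qexp_ereal_neg_infinite[where f = R] R_pos unfolding pos_def by simp
    next
      case False
      have "pos (\<lambda>\<omega>. - D \<omega>) \<le> pos (\<lambda>\<omega>. - R \<omega>) + pos H"
        using nn_integral_ennreal_add_le[where f = "\<lambda>\<omega>. - R \<omega>" and g = H] R H unfolding pos_def D_def by simp
      with False \<open>pos H \<noteq> \<infinity>\<close> have "pos (\<lambda>\<omega>. - D \<omega>) \<noteq> \<infinity>"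
        by (auto simp: top_unique)
      then have int_D: "integrable M D" and int_R: "integrable M R"
        using D R D_pos R_pos False unfolding real_integrable_def pos_def by auto
      have "integrable M (\<lambda>\<omega>. R \<omega> - D \<omega>)"
        using int_R int_D by simp
      moreover have "H = (\<lambda>\<omega>. R \<omega> - D \<omega>)"
        unfolding D_def by auto
      ultimately have int_H: "integrable M H"
        by simp
      then have "integral\<^sup>L M H \<le> 0"
        using H_nonpos qexp_ereal_integral[OF int_H] by simp
      then have "integral\<^sup>L M R \<le> integral\<^sup>L M D"
        using int_R int_H unfolding D_def by simp
      then show ?thesis
        using qexp_ereal_integral[OF int_R] qexp_ereal_integral[OF int_D] unfolding D_def by simp
    qed
  qed
qed

lemma prog_measurable_imp_measurable:
  assumes "prog_measurable M W T u" "0 \<le> T" "sets M = sets (aug_filtration M W T)"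
  shows "(\<lambda>(t, \<omega>). u t \<omega>) \<in> borel_measurable (restrict_space lborel {0..T} \<Otimes>\<^sub>M M)"
proof -
  have "(\<lambda>(t, \<omega>). u t \<omega>) \<in> borel_measurable (restrict_space lborel {0..T} \<Otimes>\<^sub>M aug_filtration M W T)"
    using assms(1,2) unfolding prog_measurable_def by auto
  moreover have "sets (restrict_space lborel {0..T} \<Otimes>\<^sub>M aug_filtration M W T)
      = sets (restrict_space lborel {0..T} \<Otimes>\<^sub>M M)"
    using assms(3) by (intro sets_pair_measure_cong) auto
  ultimately show ?thesis
    using measurable_cong_sets by blast
qed

lemma controls_adapted_subset_controls_all:
  assumes "0 \<le> T" "sets M = sets (aug_filtration M W T)"
  shows "controls_adapted M W T Uset X x \<subseteq> controls_all M T Uset"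
  using prog_measurable_imp_measurable[OF _ assms]
  by (auto simp: controls_adapted_def controls_all_def)

lemma borel_measurable_process_comp:
  fixes g :: "real \<Rightarrow> 'b::second_countable_topology \<Rightarrow> 'c::second_countable_topology \<Rightarrow> real"
  assumes g: "(\<lambda>(t, y, v). g t y v) \<in> borel_measurable borel"
    and Y: "(\<lambda>(t, \<omega>). Y t \<omega>) \<in> borel_measurable (restrict_space lborel {0..T} \<Otimes>\<^sub>M M)"
    and u: "(\<lambda>(t, \<omega>). u t \<omega>) \<in> borel_measurable (restrict_space lborel {0..T} \<Otimes>\<^sub>M M)"
  shows "(\<lambda>(t, \<omega>). g t (Y t \<omega>) (u t \<omega>)) \<in> borel_measurable (restrict_space lborel {0..T} \<Otimes>\<^sub>M M)"
proof -
  have "fst \<in> borel_measurable (restrict_space lborel {0..T} \<Otimes>\<^sub>M M)"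
    by (rule measurable_compose[OF measurable_fst]) (simp add: measurable_restrict_space1)
  then have "(\<lambda>p. (fst p, (\<lambda>(t, \<omega>). Y t \<omega>) p, (\<lambda>(t, \<omega>). u t \<omega>) p))
      \<in> borel_measurable (restrict_space lborel {0..T} \<Otimes>\<^sub>M M)"
    using Y u by (simp add: borel_prod[symmetric])
  from measurable_compose[OF this g] show ?thesis
    by (simp add: case_prod_beta')
qed

lemma borel_measurable_set_integral_process:
  fixes G :: "real \<Rightarrow> 'a \<Rightarrow> real"
  assumes "(\<lambda>(t, \<omega>). G t \<omega>) \<in> borel_measurable (restrict_space lborel {0..T} \<Otimes>\<^sub>M M)"
  shows "(\<lambda>\<omega>. LINT t:{0..T}|lborel. G t \<omega>) \<in> borel_measurable M"
proof -
  interpret T: sigma_finite_measure "restrict_space lborel {0..T}"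
    by (rule sigma_finite_measure_restrict_space) (auto simp: lborel.sigma_finite_measure_axioms)
  have "(LINT t:{0..T}|lborel. G t \<omega>) = integral\<^sup>L (restrict_space lborel {0..T}) (\<lambda>t. G t \<omega>)" for \<omega>
    unfolding set_lebesgue_integral_def by (subst integral_restrict_space) auto
  moreover have "(\<lambda>(\<omega>, t). G t \<omega>) \<in> borel_measurable (M \<Otimes>\<^sub>M restrict_space lborel {0..T})"
    using assms by (subst measurable_pair_swap_iff) simp
  ultimately show ?thesis
    using T.borel_measurable_lebesgue_integral by simp
qed

lemma borel_measurable_reward:
  assumes "0 \<le> T"
    and X: "(\<lambda>(t, \<omega>). X u x t \<omega>) \<in> borel_measurable (restrict_space lborel {0..T} \<Otimes>\<^sub>M M)"
    and u: "(\<lambda>(t, \<omega>). u t \<omega>) \<in> borel_measurable (restrict_space lborel {0..T} \<Otimes>\<^sub>M M)"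
    and Lam: "Lam \<in> borel_measurable borel"
    and g: "(\<lambda>(t, y, v). g t y v) \<in> borel_measurable borel"
  shows "reward T Lam g X x u \<in> borel_measurable M"
proof -
  have "(\<lambda>\<omega>. (T, \<omega>)) \<in> measurable M (restrict_space lborel {0..T} \<Otimes>\<^sub>M M)"
    using assms(1) by (intro measurable_Pair measurable_const measurable_ident) auto
  from measurable_compose[OF this X] have "(\<lambda>\<omega>. X u x T \<omega>) \<in> borel_measurable M"
    by simp
  moreover have "(\<lambda>\<omega>. LINT t:{0..T}|lborel. g t (X u x t \<omega>) (u t \<omega>)) \<in> borel_measurable M"
    by (intro borel_measurable_set_integral_process borel_measurable_process_comp[OF g X u])
  ultimately show ?thesis
    unfolding reward_def[abs_def] using Lam by measurable
qed

theorem proposition1: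
  fixes M :: "'a measure" and T :: real
    and W :: "real \<Rightarrow> 'a \<Rightarrow> real^'m"
    and Uset :: "(real^'d) set"
    and X :: "(real \<Rightarrow> 'a \<Rightarrow> real^'d) \<Rightarrow> real^'n \<Rightarrow> real \<Rightarrow> 'a \<Rightarrow> real^'n"
    and Lam :: "real^'n \<Rightarrow> real"
    and g :: "real \<Rightarrow> real^'n \<Rightarrow> real^'d \<Rightarrow> real"
    and h :: "(real \<Rightarrow> 'a \<Rightarrow> real^'d) \<Rightarrow> (real \<Rightarrow> real^'m) \<Rightarrow> real"
    and x :: "real^'n"
  assumes T_pos: "0 < T"
    and BM: "brownian_motion M T W"
    and F_eq: "sets M = sets (aug_filtration M W T)"
    and X_meas: "\<And>u x0. u \<in> controls_all M T Uset \<Longrightarrow>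
          (\<lambda>(t, \<omega>). X u x0 t \<omega>) \<in> borel_measurable (restrict_space lborel {0..T} \<Otimes>\<^sub>M M)"
    and X_init: "\<And>u x0 \<omega>. u \<in> controls_all M T Uset \<Longrightarrow> \<omega> \<in> space M \<Longrightarrow> X u x0 0 \<omega> = x0"
    and Lam_meas: "Lam \<in> borel_measurable borel"
    and g_meas: "(\<lambda>(t, y, v). g t y v) \<in> borel_measurable borel"
    and Lam_growth: "\<exists>C c. \<forall>y. \<bar>Lam y\<bar> \<le> C * (1 + norm y powr c)"
    and g_growth: "\<exists>C c. \<forall>t y v. \<bar>g t y v\<bar> \<le> C * (1 + norm y powr c + norm v powr c)"
    and h_feas: "dual_feasible M W T Uset X h"
  shows "(SUP u \<in> controls_adapted M W T Uset X x. Jval M T Lam g X x u)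
         \<le> qexp M (\<lambda>\<omega>. SUP u \<in> controls_all M T Uset.
               ereal (reward T Lam g X x u \<omega> - h u (\<lambda>t. W t \<omega>)))"
proof (rule SUP_least)
  fix u assume adapted: "u \<in> controls_adapted M W T Uset X x"
  then have all: "u \<in> controls_all M T Uset"
    using controls_adapted_subset_controls_all[OF less_imp_le[OF T_pos] F_eq] by blast
  then have "(\<lambda>(t, \<omega>). u t \<omega>) \<in> borel_measurable (restrict_space lborel {0..T} \<Otimes>\<^sub>M M)"
    by (simp add: controls_all_def)
  then have "reward T Lam g X x u \<in> borel_measurable M"
    using borel_measurable_reward less_imp_le[OF T_pos] X_meas[OF all] Lam_meas g_meas by blast
  moreover have "(\<lambda>\<omega>. h u (\<lambda>t. W t \<omega>)) \<in> borel_measurable M"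
    and "qexp M (\<lambda>\<omega>. ereal (h u (\<lambda>t. W t \<omega>))) \<le> 0"
    using h_feas adapted unfolding dual_feasible_def by auto
  ultimately have "Jval M T Lam g X x u
      \<le> qexp M (\<lambda>\<omega>. ereal (reward T Lam g X x u \<omega> - h u (\<lambda>t. W t \<omega>)))"
    unfolding Jval_def by (rule qexp_le_qexp_diff)
  also have "\<dots> \<le> qexp M (\<lambda>\<omega>. SUP u \<in> controls_all M T Uset.
               ereal (reward T Lam g X x u \<omega> - h u (\<lambda>t. W t \<omega>)))"
    by (rule qexp_mono) (rule SUP_upper[OF all])
  finally show "Jval M T Lam g X x u \<le> \<dots>" .
qed

end
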